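(* Let $\Gamma=(\mathcal{G},\mathcal{I},\boldsymbol{c})$ be a nonatomic routing game with BPR-type cost functions, i.e., there is $\beta\in\mathbb{R}_+$ such that $c_e(x)=t_e+a_ex^{\beta}$ with $t_e,a_e\in\mathbb{R}_+$ for every edge $e$. Then there exists a demand-independent optimal toll (DIOT) for $\Gamma$.
   Context: A nonatomic routing game $\Gamma=(\mathcal{G},\mathcal{I},\boldsymbol{c})$ consists of a finite directed multigraph $\mathcal{G}=(\mathcal{V},\mathcal{E})$, a finite set $\mathcal{I}$ of origin-destination pairs $i$ with origin $o^i$ and destination $d^i$, and nondecreasing continuous cost functions $c_e:\mathbb{R}_+\to\mathbb{R}_+$. $\mathcal{P}^i$ is the set of simple $o^i$–$d^i$ paths. For a demand vector $\boldsymbol{\mu}\in\mathbb{R}_+^{\mathcal{I}}$, feasible flows are $\boldsymbol{f}\in\mathbb{R}_+^{\mathcal{P}}$ with $\sum_{p\in\mathcal{P}^i}f_p=\mu^i$; loads $x_e=\sum_{p\ni e}f_p$; path costs $c_p=\sum_{e\in p}c_e(x_e)$. A Wardrop equilibrium is a feasible flow where every used path of each pair $i$ has cost at most that of any other path in $\mathcal{P}^i$. The total cost is $L(\boldsymbol{f})=\sum_p f_pc_p(\boldsymbol{f})$; a system optimum minimizes $L$ over feasible flows. For a toll vector $\boldsymbol{\tau}\in\mathbb{R}^{\mathcal{E}}$ (entries may be negative), $\Gamma^{\boldsymbol{\tau}}$ has edge costs $c_e(x)+\tau_e$. $\boldsymbol{\tau}$ is a DIOT for $\Gamma$ if for every demand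 vector $\boldsymbol{\mu}\in\mathbb{R}_+^{\mathcal{I}}$ every Wardrop equilibrium of $\Gamma^{\boldsymbol{\tau}}$ with demand $\boldsymbol{\mu}$ is a system optimum of $\Gamma$ for demand $\boldsymbol{\mu}$. *)

theory Defs
  imports Complex_Main
begin

text \<open>A finite directed multigraph is given by a finite vertex set V, a finite edge set E
  (edges of an arbitrary type 'e, so parallel edges are allowed) and tail/head maps
  src, trg.\<close>

definition multigraph :: "'v set \<Rightarrow> 'e set \<Rightarrow> ('e \<Rightarrow> 'v) \<Rightarrow> ('e \<Rightarrow> 'v) \<Rightarrow> bool" where
  "multigraph V E src trg \<longleftrightarrow> finite V \<and> finite E \<and> (\<forall>e\<in>E. src e \<in> V \<and> trg e \<in> V)"

definition path_verts :: "('e \<Rightarrow> 'v) \<Rightarrow> 'v \<Rightarrow> 'e list \<Rightarrow> 'v list" where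
  "path_verts trg s p = s # map trg p"

definition simple_path :: "'e set \<Rightarrow> ('e \<Rightarrow> 'v) \<Rightarrow> ('e \<Rightarrow> 'v) \<Rightarrow> 'v \<Rightarrow> 'v \<Rightarrow> 'e list \<Rightarrow> bool" where
  "simple_path E src trg s d p \<longleftrightarrow>
     set p \<subseteq> E \<and>
     (\<forall>k < length p. src (p ! k) = path_verts trg s p ! k) \<and>
     last (path_verts trg s p) = d \<and>
     distinct (path_verts trg s p)"

definition paths :: "'e set \<Rightarrow> ('e \<Rightarrow> 'v) \<Rightarrow> ('e \<Rightarrow> 'v) \<Rightarrow> 'v \<Rightarrow> 'v \<Rightarrow> 'e list set" where
  "paths E src trg s d = {p. simple_path E src trg s d p}"

definition feasible ::
  "'e set \<Rightarrow> ('e \<Rightarrow> 'v) \<Rightarrow> ('e \<Rightarrow> 'v) \<Rightarrow> 'i set \<Rightarrow> ('i \<Rightarrow> 'v) \<Rightarrow> ('i \<Rightarrow> 'v)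
   \<Rightarrow> ('i \<Rightarrow> real) \<Rightarrow> ('i \<Rightarrow> 'e list \<Rightarrow> real) \<Rightarrow> bool" where
  "feasible E src trg I orig dest \<mu> f \<longleftrightarrow>
     (\<forall>i\<in>I. \<forall>p\<in>paths E src trg (orig i) (dest i). 0 \<le> f i p) \<and>
     (\<forall>i\<in>I. (\<Sum>p\<in>paths E src trg (orig i) (dest i). f i p) = \<mu> i)"

definition load ::
  "'e set \<Rightarrow> ('e \<Rightarrow> 'v) \<Rightarrow> ('e \<Rightarrow> 'v) \<Rightarrow> 'i set \<Rightarrow> ('i \<Rightarrow> 'v) \<Rightarrow> ('i \<Rightarrow> 'v)
   \<Rightarrow> ('i \<Rightarrow> 'e list \<Rightarrow> real) \<Rightarrow> 'e \<Rightarrow> real" where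
  "load E src trg I orig dest f e =
     (\<Sum>i\<in>I. \<Sum>p\<in>{p\<in>paths E src trg (orig i) (dest i). e \<in> set p}. f i p)"

definition path_cost ::
  "'e set \<Rightarrow> ('e \<Rightarrow> 'v) \<Rightarrow> ('e \<Rightarrow> 'v) \<Rightarrow> 'i set \<Rightarrow> ('i \<Rightarrow> 'v) \<Rightarrow> ('i \<Rightarrow> 'v)
   \<Rightarrow> ('e \<Rightarrow> real \<Rightarrow> real) \<Rightarrow> ('i \<Rightarrow> 'e list \<Rightarrow> real) \<Rightarrow> 'e list \<Rightarrow> real" where
  "path_cost E src trg I orig dest c f p =
     (\<Sum>e\<in>set p. c e (load E src trg I orig dest f e))"

definition wardrop_eq ::
  "'e set \<Rightarrow> ('e \<Rightarrow> 'v) \<Rightarrow> ('e \<Rightarrow> 'v) \<Rightarrow> 'i set \<Rightarrow> ('i \<Rightarrow> 'v) \<Rightarrow> ('i \<Rightarrow> 'v)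
   \<Rightarrow> ('e \<Rightarrow> real \<Rightarrow> real) \<Rightarrow> ('i \<Rightarrow> real) \<Rightarrow> ('i \<Rightarrow> 'e list \<Rightarrow> real) \<Rightarrow> bool" where
  "wardrop_eq E src trg I orig dest c \<mu> f \<longleftrightarrow>
     feasible E src trg I orig dest \<mu> f \<and>
     (\<forall>i\<in>I. \<forall>p\<in>paths E src trg (orig i) (dest i). 0 < f i p \<longrightarrow>
        (\<forall>q\<in>paths E src trg (orig i) (dest i).
           path_cost E src trg I orig dest c f p \<le> path_cost E src trg I orig dest c f q))"

definition total_cost ::
  "'e set \<Rightarrow> ('e \<Rightarrow> 'v) \<Rightarrow> ('e \<Rightarrow> 'v) \<Rightarrow> 'i set \<Rightarrow> ('i \<Rightarrow> 'v) \<Rightarrow> ('i \<Rightarrow> 'v)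
   \<Rightarrow> ('e \<Rightarrow> real \<Rightarrow> real) \<Rightarrow> ('i \<Rightarrow> 'e list \<Rightarrow> real) \<Rightarrow> real" where
  "total_cost E src trg I orig dest c f =
     (\<Sum>i\<in>I. \<Sum>p\<in>paths E src trg (orig i) (dest i).
        f i p * path_cost E src trg I orig dest c f p)"

definition system_optimum ::
  "'e set \<Rightarrow> ('e \<Rightarrow> 'v) \<Rightarrow> ('e \<Rightarrow> 'v) \<Rightarrow> 'i set \<Rightarrow> ('i \<Rightarrow> 'v) \<Rightarrow> ('i \<Rightarrow> 'v)
   \<Rightarrow> ('e \<Rightarrow> real \<Rightarrow> real) \<Rightarrow> ('i \<Rightarrow> real) \<Rightarrow> ('i \<Rightarrow> 'e list \<Rightarrow> real) \<Rightarrow> bool" where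
  "system_optimum E src trg I orig dest c \<mu> f \<longleftrightarrow>
     feasible E src trg I orig dest \<mu> f \<and>
     (\<forall>g. feasible E src trg I orig dest \<mu> g \<longrightarrow>
        total_cost E src trg I orig dest c f \<le> total_cost E src trg I orig dest c g)"

definition is_DIOT ::
  "'e set \<Rightarrow> ('e \<Rightarrow> 'v) \<Rightarrow> ('e \<Rightarrow> 'v) \<Rightarrow> 'i set \<Rightarrow> ('i \<Rightarrow> 'v) \<Rightarrow> ('i \<Rightarrow> 'v)
   \<Rightarrow> ('e \<Rightarrow> real \<Rightarrow> real) \<Rightarrow> ('e \<Rightarrow> real) \<Rightarrow> bool" where
  "is_DIOT E src trg I orig dest c \<tau> \<longleftrightarrow>
     (\<forall>\<mu>. (\<forall>i\<in>I. 0 \<le> \<mu> i) \<longrightarrow>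
        (\<forall>f. wardrop_eq E src trg I orig dest (\<lambda>e x. c e x + \<tau> e) \<mu> f \<longrightarrow>
             system_optimum E src trg I orig dest c \<mu> f))"

text \<open>x^beta for x \<ge> 0, with the convention x^0 = 1 (also at x = 0).\<close>

definition rpow :: "real \<Rightarrow> real \<Rightarrow> real" where
  "rpow x \<beta> = (if \<beta> = 0 then 1 else x powr \<beta>)"

definition bpr_cost :: "('e \<Rightarrow> real) \<Rightarrow> ('e \<Rightarrow> real) \<Rightarrow> real \<Rightarrow> 'e \<Rightarrow> real \<Rightarrow> real" where
  "bpr_cost t a \<beta> e x = t e + a e * rpow x \<beta>"

end

theory Submission
  imports Defs "HOL-Analysis.Convex"
begin

text \<open>With \<open>\<tau>\<^sub>e = -\<beta> t\<^sub>e / (\<beta> + 1)\<close>, the scaled tolled cost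
  \<open>(\<beta> + 1) (c\<^sub>e(x) + \<tau>\<^sub>e) = t\<^sub>e + (\<beta> + 1) a\<^sub>e x\<^sup>\<beta>\<close> is exactly the marginal cost \<open>(x c\<^sub>e(x))'\<close>.
  Hence a Wardrop equilibrium of the tolled game satisfies the variational inequality of the
  convex program minimising \<open>\<Sum>\<^sub>e x\<^sub>e c\<^sub>e(x\<^sub>e)\<close>, and convexity of \<open>x c\<^sub>e(x)\<close> (the tangent line
  lies below the graph) turns that inequality into global optimality, for every demand.\<close>

lemma powr_tangent_le:
  fixes x y b :: real
  assumes "0 < x" "0 < y" "0 < b"
  shows "(b + 1) * x powr b * y - b * (x * x powr b) \<le> y * y powr b"
proof -
  have "(x powr (b+1)) powr (b/(b+1)) * (y powr (b+1)) powr (1/(b+1))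
        \<le> b/(b+1) * x powr (b+1) + 1/(b+1) * y powr (b+1)"
    by (rule Youngs_inequality_0) (use assms in \<open>auto simp: field_simps\<close>)
  moreover have "(x powr (b+1)) powr (b/(b+1)) = x powr b"
    and "(y powr (b+1)) powr (1/(b+1)) = y"
    using assms by (simp_all add: powr_powr)
  moreover have "x powr (b+1) = x * x powr b" "y powr (b+1) = y * y powr b"
    using assms by (simp_all add: powr_add)
  ultimately have "x powr b * y \<le> (b * (x * x powr b) + y * y powr b) / (b + 1)"
    by (simp add: add_divide_distrib)
  then show ?thesis
    using assms by (simp add: le_divide_eq algebra_simps)
qed

lemma rpow_tangent_le:
  fixes x y b :: real
  assumes "0 \<le> x" "0 \<le> y" "0 \<le> b"
  shows "(b + 1) * rpow x b * (y - x) \<le> y * rpow y b - x * rpow x b"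
proof -
  have "(b + 1) * rpow x b * y - b * (x * rpow x b) \<le> y * rpow y b"
  proof (cases "b = 0 \<or> x = 0 \<or> y = 0")
    case True
    then show ?thesis using assms by (auto simp: rpow_def)
  next
    case False
    then show ?thesis using assms powr_tangent_le[of x y b] by (simp add: rpow_def)
  qed
  then show ?thesis by (simp add: algebra_simps)
qed

lemma sum_mult_le_if_support_minimises:
  fixes f g C :: "'a \<Rightarrow> real"
  assumes "finite P" "\<forall>p\<in>P. 0 \<le> f p" "\<forall>p\<in>P. 0 \<le> g p" "sum f P = sum g P"
    and minimal: "\<forall>p\<in>P. 0 < f p \<longrightarrow> (\<forall>q\<in>P. C p \<le> C q)"
  shows "(\<Sum>p\<in>P. f p * C p) \<le> (\<Sum>p\<in>P. g p * C p)"
proof (cases "\<exists>p0\<in>P. 0 < f p0")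
  case True
  then obtain p0 where p0: "p0 \<in> P" "0 < f p0" by blast
  have "(\<Sum>p\<in>P. f p * C p) = (\<Sum>p\<in>P. f p * C p0)"
  proof (rule sum.cong[OF refl])
    fix p assume "p \<in> P"
    then show "f p * C p = f p * C p0"
      using minimal p0 assms(2) by (cases "0 < f p") (auto intro: order.antisym)
  qed
  also have "\<dots> = (\<Sum>p\<in>P. g p * C p0)"
    using assms(4) by (simp add: sum_distrib_right[symmetric])
  also have "\<dots> \<le> (\<Sum>p\<in>P. g p * C p)"
    using minimal p0 assms(3) by (intro sum_mono mult_left_mono) auto
  finally show ?thesis .
next
  case False
  then have "sum g P = 0"
    using assms(2,4) by (metis antisym_conv2 sum.neutral)
  then have "\<forall>p\<in>P. g p = 0"
    using assms(1,3) sum_nonneg_eq_0_iff by blast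
  then show ?thesis
    using False assms(2) by (simp add: antisym_conv2)
qed

lemma paths_subset_edges: "p \<in> paths E src trg s d \<Longrightarrow> set p \<subseteq> E"
  unfolding paths_def simple_path_def by blast

lemma finite_paths:
  assumes "finite E"
  shows "finite (paths E src trg s d)"
proof -
  have "paths E src trg s d \<subseteq> {p. set p \<subseteq> E \<and> length p \<le> card E}"
  proof
    fix p assume p: "p \<in> paths E src trg s d"
    then have "distinct p"
      unfolding paths_def simple_path_def path_verts_def by (auto simp: distinct_map)
    then have "length p = card (set p)" by (simp add: distinct_card)
    also have "\<dots> \<le> card E" using p assms by (intro card_mono paths_subset_edges)
    finally show "p \<in> {p. set p \<subseteq> E \<and> length p \<le> card E}"
      using paths_subset_edges[OF p] by simp
  qed
  then show ?thesis using finite_lists_length_le[OF assms] finite_subset by blast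
qed

lemma load_nonneg:
  "feasible E src trg I orig dest \<mu> f \<Longrightarrow> 0 \<le> load E src trg I orig dest f e"
  unfolding feasible_def load_def by (auto intro!: sum_nonneg)

lemma sum_paths_eq_sum_edges_load:
  fixes h :: "'i \<Rightarrow> 'e list \<Rightarrow> real" and w :: "'e \<Rightarrow> real"
  assumes "finite E" "finite I"
  shows "(\<Sum>i\<in>I. \<Sum>p\<in>paths E src trg (orig i) (dest i). h i p * (\<Sum>e\<in>set p. w e))
       = (\<Sum>e\<in>E. w e * load E src trg I orig dest h e)"
proof -
  let ?P = "\<lambda>i. paths E src trg (orig i) (dest i)"
  have "(\<Sum>i\<in>I. \<Sum>p\<in>?P i. h i p * (\<Sum>e\<in>set p. w e))
      = (\<Sum>i\<in>I. \<Sum>p\<in>?P i. \<Sum>e\<in>E. if e \<in> set p then h i p * w e else 0)"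
  proof (intro sum.cong refl)
    fix i p assume "p \<in> ?P i"
    then have "set p = E \<inter> set p" by (auto dest: paths_subset_edges)
    then have "(\<Sum>e\<in>set p. w e) = (\<Sum>e\<in>E. if e \<in> set p then w e else 0)"
      using sum.inter_restrict[OF assms(1), of w "set p"] by simp
    then show "h i p * (\<Sum>e\<in>set p. w e) = (\<Sum>e\<in>E. if e \<in> set p then h i p * w e else 0)"
      by (simp add: sum_distrib_left if_distrib cong: if_cong)
  qed
  also have "\<dots> = (\<Sum>e\<in>E. \<Sum>i\<in>I. \<Sum>p\<in>?P i. if e \<in> set p then h i p * w e else 0)"
    by (subst sum.swap) (simp add: sum.swap[of _ E])
  also have "\<dots> = (\<Sum>e\<in>E. w e * load E src trg I orig dest h e)"
    by (simp add: finite_paths[OF assms(1)] load_def sum_distrib_left sum.inter_filter if_distrib mult.commute cong: if_cong)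
  finally show ?thesis .
qed

lemma total_cost_eq_sum_edges:
  assumes "finite E" "finite I"
  shows "total_cost E src trg I orig dest c f
       = (\<Sum>e\<in>E. c e (load E src trg I orig dest f e) * load E src trg I orig dest f e)"
  unfolding total_cost_def path_cost_def by (rule sum_paths_eq_sum_edges_load[OF assms])

lemma wardrop_eq_variational_ineq:
  assumes "finite E" "finite I"
    and "wardrop_eq E src trg I orig dest c \<mu> f" "feasible E src trg I orig dest \<mu> g"
  defines "x \<equiv> load E src trg I orig dest f" and "y \<equiv> load E src trg I orig dest g"
  shows "(\<Sum>e\<in>E. c e (x e) * x e) \<le> (\<Sum>e\<in>E. c e (x e) * y e)"
proof -
  let ?P = "\<lambda>i. paths E src trg (orig i) (dest i)"
  let ?C = "path_cost E src trg I orig dest c f"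
  have "(\<Sum>i\<in>I. \<Sum>p\<in>?P i. f i p * ?C p) \<le> (\<Sum>i\<in>I. \<Sum>p\<in>?P i. g i p * ?C p)"
  proof (rule sum_mono)
    fix i assume "i \<in> I"
    then show "(\<Sum>p\<in>?P i. f i p * ?C p) \<le> (\<Sum>p\<in>?P i. g i p * ?C p)"
      using assms(3,4) finite_paths[OF assms(1)]
      by (intro sum_mult_le_if_support_minimises) (auto simp: wardrop_eq_def feasible_def)
  qed
  then show ?thesis
    unfolding path_cost_def sum_paths_eq_sum_edges_load[OF assms(1,2)] x_def y_def
    by (simp add: mult.commute)
qed

lemma is_DIOT_if_scaled_tolled_cost_below_slope:
  assumes "finite E" "finite I" "0 < k"
    and slope: "\<forall>e\<in>E. \<forall>x\<ge>0. \<forall>y\<ge>0. k * (c e x + \<tau> e) * (y - x) \<le> c e y * y - c e x * x"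
  shows "is_DIOT E src trg I orig dest c \<tau>"
  unfolding is_DIOT_def system_optimum_def
proof (intro allI impI conjI)
  fix \<mu> f g
  assume wardrop: "wardrop_eq E src trg I orig dest (\<lambda>e x. c e x + \<tau> e) \<mu> f"
  then show feasible_f: "feasible E src trg I orig dest \<mu> f"
    by (simp add: wardrop_eq_def)
  assume feasible_g: "feasible E src trg I orig dest \<mu> g"
  define x where "x = load E src trg I orig dest f"
  define y where "y = load E src trg I orig dest g"
  have "0 \<le> (\<Sum>e\<in>E. (c e (x e) + \<tau> e) * (y e - x e))"
    using wardrop_eq_variational_ineq[OF assms(1,2) wardrop feasible_g]
    by (simp add: x_def y_def right_diff_distrib sum_subtractf)
  then have "0 \<le> (\<Sum>e\<in>E. k * (c e (x e) + \<tau> e) * (y e - x e))"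
    using \<open>0 < k\<close> by (simp add: mult.assoc sum_distrib_left[symmetric])
  also have "\<dots> \<le> (\<Sum>e\<in>E. c e (y e) * y e - c e (x e) * x e)"
    using slope load_nonneg[OF feasible_f] load_nonneg[OF feasible_g]
    by (intro sum_mono) (auto simp: x_def y_def)
  finally show "total_cost E src trg I orig dest c f \<le> total_cost E src trg I orig dest c g"
    by (simp add: total_cost_eq_sum_edges[OF assms(1,2)] x_def y_def sum_subtractf)
qed

lemma bpr_cost_scaled_toll_below_slope:
  fixes t a :: "'e \<Rightarrow> real" and \<beta> x y :: real
  assumes "0 \<le> \<beta>" "0 \<le> a e" "0 \<le> x" "0 \<le> y"
  shows "(\<beta> + 1) * (bpr_cost t a \<beta> e x - \<beta> * t e / (\<beta> + 1)) * (y - x)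
         \<le> bpr_cost t a \<beta> e y * y - bpr_cost t a \<beta> e x * x"
proof -
  have "a e * ((\<beta> + 1) * rpow x \<beta> * (y - x)) \<le> a e * (y * rpow y \<beta> - x * rpow x \<beta>)"
    using rpow_tangent_le[OF assms(3,4,1)] assms(2) by (rule mult_left_mono)
  moreover have "(\<beta> + 1) * (bpr_cost t a \<beta> e x - \<beta> * t e / (\<beta> + 1))
      = t e + (\<beta> + 1) * a e * rpow x \<beta>"
    using assms(1) by (simp add: bpr_cost_def field_simps)
  ultimately show ?thesis
    by (simp add: bpr_cost_def algebra_simps)
qed

theorem corollary3:
  fixes V :: "'v set" and E :: "'e set" and src trg :: "'e \<Rightarrow> 'v"
    and I :: "'i set" and orig dest :: "'i \<Rightarrow> 'v"
    and t a :: "'e \<Rightarrow> real" and \<beta> :: real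
  assumes "multigraph V E src trg"
    and "finite I"
    and "\<forall>i\<in>I. orig i \<in> V \<and> dest i \<in> V"
    and "0 \<le> \<beta>"
    and "\<forall>e\<in>E. 0 \<le> t e \<and> 0 \<le> a e"
  shows "\<exists>\<tau> :: 'e \<Rightarrow> real. is_DIOT E src trg I orig dest (bpr_cost t a \<beta>) \<tau>"
proof
  have "finite E" using assms(1) by (simp add: multigraph_def)
  moreover have "0 < \<beta> + 1" using assms(4) by simp
  ultimately show "is_DIOT E src trg I orig dest (bpr_cost t a \<beta>) (\<lambda>e. - \<beta> * t e / (\<beta> + 1))"
    using assms(2,4,5)
    by (intro is_DIOT_if_scaled_tolled_cost_below_slope[where k = "\<beta> + 1"])
      (auto intro!: bpr_cost_scaled_toll_below_slope)
qed

end
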